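(* For all $t\in\mathbb N$ we have $\lvert v_t^\alpha-v_t^\beta\rvert\le 48$.
   Context: Let $\mathsf r(n)$ be the number of (overlapping) occurrences of $\mathtt{11}$ in the binary expansion of $n\in\mathbb N=\{0,1,\dots\}$, and $d(t,n)=\mathsf r(n+t)-\mathsf r(n)$. Let $a_t(k)$, $b_t(k)$ ($k\in\mathbb Z$) be the asymptotic densities (which exist and define probability distributions on $\mathbb Z$) of $\{n:d(t,2n)=k\}$ and $\{n:d(t,2n+1)=k\}$. Let $v_t^\alpha$ and $v_t^\beta$ denote the variances of the distributions $a_t$ and $b_t$ respectively. *)

theory Defs
  imports "HOL-Analysis.Analysis"
begin

definition r :: "nat \<Rightarrow> nat" where
  "r n = card {i. bit n i \<and> bit n (Suc i)}"

definition d :: "nat \<Rightarrow> nat \<Rightarrow> int" where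
  "d t n = int (r (n + t)) - int (r n)"

text \<open>Asymptotic density of a set of naturals (the limit exists in the cases used).\<close>
definition asym_density :: "nat set \<Rightarrow> real" where
  "asym_density S = lim (\<lambda>N. real (card (S \<inter> {..<N})) / real N)"

definition a :: "nat \<Rightarrow> int \<Rightarrow> real" where
  "a t k = asym_density {n. d t (2 * n) = k}"

definition b :: "nat \<Rightarrow> int \<Rightarrow> real" where
  "b t k = asym_density {n. d t (2 * n + 1) = k}"

definition variance_int :: "(int \<Rightarrow> real) \<Rightarrow> real" where
  "variance_int p = (let \<mu> = (\<Sum>\<^sub>\<infinity>k\<in>UNIV. real_of_int k * p k)
                      in \<Sum>\<^sub>\<infinity>k\<in>UNIV. (real_of_int k - \<mu>)^2 * p k)"

definition v_alpha :: "nat \<Rightarrow> real" where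
  "v_alpha t = variance_int (a t)"

definition v_beta :: "nat \<Rightarrow> real" where
  "v_beta t = variance_int (b t)"

end

(*
  The binary recursion r(2m) = r(m), r(2m+1) = r(m) + [m odd] expresses d(t,.) through
  d(s,.) with s = t div 2 (or s + 1), according to the parities of t and n. Each level set
  of d(t,.) on even or on odd arguments is thus an interleaving of two level sets of the
  previous level, so all densities exist and, with e = [s odd],
    a_(2s)   = (a_s + b_s)/2,                   b_(2s)   = (a_s(. - e) + b_s(. + e))/2,
    a_(2s+1) = (a_s(. - e) + b_s(. - 1 + e))/2,  b_(2s+1) = (a_(s+1) + b_(s+1)(. + 1))/2.
  Only b_1 has infinite support; it solves b_1 = (a_1 + b_1(. + 1))/2 and decays
  geometrically, so all these distributions have finite second moments. They have mass 1
  and means +-[t odd]/2, hence v^alpha_t - v^beta_t is the difference of the second moments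
  of a_t and b_t. Their sum S_t satisfies S_(2s) = S_s + 2[s odd] and
  S_(2s+1) = (S_s + S_(s+1) + 3)/2, so |S_(s+1) - S_s| <= 3 by induction, and the two second
  moments differ by at most 2.
*)

theory Submission
  imports Defs "HOL-Real_Asymp.Real_Asymp"
begin

section \<open>Blocks 11 under doubling\<close>

lemma bit_nat_imp_less: "bit (n::nat) i \<Longrightarrow> i < n"
  by (metis bit_iff_odd div_less dual_order.strict_trans1 even_zero less_exp not_less)

lemma r_rec: "r n = r (n div 2) + of_bool (odd n \<and> odd (n div 2))"
proof -
  let ?P = "\<lambda>(n::nat) i. bit n i \<and> bit n (Suc i)"
  have fin: "finite {i. ?P m i}" for m
    by (rule finite_subset[of _ "{..<m}"]) (auto dest: bit_nat_imp_less)
  have split: "{i. ?P n i} = {i::nat. i = 0 \<and> ?P n 0} \<union> Suc ` {i. ?P (n div 2) i}"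
  proof (intro set_eqI iffI)
    fix i assume "i \<in> {i. ?P n i}"
    then show "i \<in> {i::nat. i = 0 \<and> ?P n 0} \<union> Suc ` {i. ?P (n div 2) i}"
      by (cases i) (auto simp: bit_Suc)
  qed (auto simp: bit_Suc)
  have "r n = card {i::nat. i = 0 \<and> ?P n 0} + card (Suc ` {i. ?P (n div 2) i})"
    unfolding r_def split by (rule card_Un_disjoint) (use fin in auto)
  then show ?thesis
    by (simp add: r_def card_image bit_0 bit_Suc)
qed

lemma r_double: "r (2 * m) = r m"
  using r_rec[of "2 * m"] by simp

lemma r_double_plus1: "r (2 * m + 1) = r m + of_bool (odd m)"
  using r_rec[of "2 * m + 1"] by simp

lemma d_0: "d 0 n = 0"
  by (simp add: d_def)

lemma d_even_even: "d (2 * s) (2 * m) = d s m"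
  using r_double[of "m + s"] r_double[of m] by (simp add: d_def algebra_simps)

lemma d_even_odd: "d (2 * s) (2 * m + 1) = d s m + of_bool (odd (m + s)) - of_bool (odd m)"
  using r_double_plus1[of "m + s"] r_double_plus1[of m] by (simp add: d_def algebra_simps)

lemma d_odd_even: "d (2 * s + 1) (2 * m) = d s m + of_bool (odd (m + s))"
  using r_double_plus1[of "m + s"] r_double[of m] by (simp add: d_def algebra_simps)

lemma d_odd_odd: "d (2 * s + 1) (2 * m + 1) = d (s + 1) m - of_bool (odd m)"
  using r_double[of "m + s + 1"] r_double_plus1[of m] by (simp add: d_def algebra_simps)

lemma d_1_le: "d 1 n \<le> 1"
proof (induction n rule: nat_bit_induct)
  case (even m)
  then show ?case using d_odd_even[of 0 m] by (simp add: d_0)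
next
  case (odd m)
  then show ?case using d_odd_odd[of 0 m] by simp
qed (simp add: d_def r_def)

section \<open>Asymptotic densities\<close>

text \<open>\<^const>\<open>asym_density\<close> is a \<^const>\<open>lim\<close>, an unspecified value when the limit does not
  exist; \<open>has_density\<close> asserts the limit.\<close>

definition has_density :: "nat set \<Rightarrow> real \<Rightarrow> bool" where
  "has_density S x \<longleftrightarrow> (\<lambda>N. real (card (S \<inter> {..<N})) / real N) \<longlonglongrightarrow> x"

lemma asym_density_eqI: "has_density S x \<Longrightarrow> asym_density S = x"
  unfolding has_density_def asym_density_def by (rule limI)

lemma has_density_nonneg: "has_density S x \<Longrightarrow> 0 \<le> x"
  unfolding has_density_def by (rule LIMSEQ_le_const) auto

lemma has_density_empty: "has_density {} 0"
  by (simp add: has_density_def)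

lemma has_density_UNIV: "has_density UNIV 1"
proof -
  have "(\<lambda>N. real N / real N) \<longlonglongrightarrow> (1::real)"
    by real_asymp
  then show ?thesis
    by (simp add: has_density_def)
qed

lemma has_density_const: "has_density {m. P} (of_bool P)"
  by (cases P) (simp_all add: has_density_UNIV has_density_empty)

lemma card_lessThan_even_odd:
  fixes S :: "nat set"
  shows "card (S \<inter> {..<N}) =
     card ({m. 2 * m \<in> S} \<inter> {..<N - N div 2}) + card ({m. 2 * m + 1 \<in> S} \<inter> {..<N div 2})"
proof -
  have split: "S \<inter> {..<N} = (*) 2 ` ({m. 2 * m \<in> S} \<inter> {..<N - N div 2})
      \<union> (\<lambda>m. 2 * m + 1) ` ({m. 2 * m + 1 \<in> S} \<inter> {..<N div 2})"
  proof (intro set_eqI iffI)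
    fix n assume "n \<in> S \<inter> {..<N}"
    then show "n \<in> (*) 2 ` ({m. 2 * m \<in> S} \<inter> {..<N - N div 2})
        \<union> (\<lambda>m. 2 * m + 1) ` ({m. 2 * m + 1 \<in> S} \<inter> {..<N div 2})"
      by (cases "even n") (auto elim!: evenE oddE)
  qed auto
  have "card (S \<inter> {..<N}) = card ((*) 2 ` ({m. 2 * m \<in> S} \<inter> {..<N - N div 2}))
      + card ((\<lambda>m. 2 * m + 1) ` ({m. 2 * m + 1 \<in> S} \<inter> {..<N div 2}))"
    unfolding split by (rule card_Un_disjoint) (auto, presburger)
  then show ?thesis
    by (simp add: card_image inj_on_def)
qed

lemma tendsto_half_div2: "(\<lambda>N. real (N div 2) / real N) \<longlonglongrightarrow> 1 / 2"
proof (rule tendsto_sandwich)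
  have "real N - 1 \<le> 2 * real (N div 2) \<and> 2 * real (N div 2) \<le> real N" for N
    by linarith
  then show "\<forall>\<^sub>F N in sequentially. (real N - 1) / (2 * real N) \<le> real (N div 2) / real N"
    and "\<forall>\<^sub>F N in sequentially. real (N div 2) / real N \<le> real N / (2 * real N)"
    by (auto simp: frac_le divide_simps eventually_sequentially intro!: exI[of _ 1])
qed real_asymp+

lemma has_density_rescaled_count:
  assumes "has_density S x" and "filterlim h at_top sequentially"
    and "(\<lambda>N. real (h N) / real N) \<longlonglongrightarrow> c"
  shows "(\<lambda>N. real (card (S \<inter> {..<h N})) / real N) \<longlonglongrightarrow> x * c"
proof -
  have "(\<lambda>N. real (card (S \<inter> {..<h N})) / real (h N)) \<longlonglongrightarrow> x"
    using assms(1,2) unfolding has_density_def by (rule filterlim_compose)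
  then have "(\<lambda>N. real (card (S \<inter> {..<h N})) / real (h N) * (real (h N) / real N)) \<longlonglongrightarrow> x * c"
    using assms(3) by (rule tendsto_mult)
  moreover have "real (card (S \<inter> {..<h N})) / real (h N) * (real (h N) / real N)
      = real (card (S \<inter> {..<h N})) / real N" for N
    by (cases "h N = 0") auto
  ultimately show ?thesis
    by (simp only:)
qed

lemma has_density_interleave:
  fixes S :: "nat set"
  assumes "has_density {m. 2 * m \<in> S} x" and "has_density {m. 2 * m + 1 \<in> S} y"
  shows "has_density S ((x + y) / 2)"
proof -
  have lower_half: "filterlim (\<lambda>N::nat. N div 2) at_top sequentially"
    by (rule filterlim_at_top_div_const_nat) simp
  then have upper_half: "filterlim (\<lambda>N::nat. N - N div 2) at_top sequentially"
    by (rule filterlim_at_top_mono) (intro always_eventually allI, presburger)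
  have "(\<lambda>N. 1 - real (N div 2) / real N) \<longlonglongrightarrow> 1 - 1 / 2"
    by (intro tendsto_diff tendsto_const tendsto_half_div2)
  moreover have "\<forall>\<^sub>F N in sequentially. 1 - real (N div 2) / real N = real (N - N div 2) / real N"
    by (auto simp: eventually_sequentially field_simps intro!: exI[of _ 1])
  ultimately have "(\<lambda>N. real (N - N div 2) / real N) \<longlonglongrightarrow> 1 / 2"
    by (simp add: tendsto_cong)
  then have "(\<lambda>N. real (card ({m. 2 * m \<in> S} \<inter> {..<N - N div 2})) / real N
      + real (card ({m. 2 * m + 1 \<in> S} \<inter> {..<N div 2})) / real N) \<longlonglongrightarrow> x * (1 / 2) + y * (1 / 2)"
    by (intro tendsto_add has_density_rescaled_count assms lower_half upper_half tendsto_half_div2)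
  then show ?thesis
    unfolding has_density_def card_lessThan_even_odd[of S] by (simp add: add_divide_distrib)
qed

section \<open>Recurrences for the distributions\<close>

definition densities_exist :: "nat \<Rightarrow> bool" where
  "densities_exist t \<longleftrightarrow>
     (\<forall>k. has_density {m. d t (2 * m) = k} (a t k) \<and> has_density {m. d t (2 * m + 1) = k} (b t k))"

lemma densities_existI:
  assumes "\<And>k. \<exists>x. has_density {m. d t (2 * m) = k} x"
    and "\<And>k. \<exists>y. has_density {m. d t (2 * m + 1) = k} y"
  shows "densities_exist t"
  using assms unfolding densities_exist_def a_def b_def by (metis asym_density_eqI)

lemma has_density_level_set:
  assumes "\<And>j. f (2 * j) = d s (2 * j) + c0" and "\<And>j. f (2 * j + 1) = d s (2 * j + 1) + c1"
    and "has_density {j. d s (2 * j) = k - c0} x" and "has_density {j. d s (2 * j + 1) = k - c1} y"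
  shows "has_density {m. f m = k} ((x + y) / 2)"
  by (rule has_density_interleave) (use assms in \<open>simp_all add: eq_diff_eq\<close>)

lemma has_density_a_double:
  "densities_exist s \<Longrightarrow> has_density {m. d (2 * s) (2 * m) = k} ((a s k + b s k) / 2)"
  using has_density_level_set[of "d s" s 0 0 k] unfolding d_even_even densities_exist_def by simp

lemma has_density_b_double:
  "densities_exist s \<Longrightarrow> has_density {m. d (2 * s) (2 * m + 1) = k}
     ((a s (k - of_bool (odd s)) + b s (k + of_bool (odd s))) / 2)"
  using has_density_level_set[of "\<lambda>m. d s m + of_bool (odd (m + s)) - of_bool (odd m)" s
      "of_bool (odd s)" "- of_bool (odd s)" k]
  unfolding d_even_odd densities_exist_def by simp

lemma has_density_a_double_plus1:
  "densities_exist s \<Longrightarrow> has_density {m. d (2 * s + 1) (2 * m) = k}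
     ((a s (k - of_bool (odd s)) + b s (k - of_bool (even s))) / 2)"
  using has_density_level_set[of "\<lambda>m. d s m + of_bool (odd (m + s))" s
      "of_bool (odd s)" "of_bool (even s)" k]
  unfolding d_odd_even densities_exist_def by simp

lemma has_density_b_double_plus1:
  "densities_exist (s + 1) \<Longrightarrow> has_density {m. d (2 * s + 1) (2 * m + 1) = k}
     ((a (s + 1) k + b (s + 1) (k + 1)) / 2)"
  using has_density_level_set[of "\<lambda>m. d (s + 1) m - of_bool (odd m)" "s + 1" 0 "- 1" k]
  unfolding d_odd_odd densities_exist_def by simp

lemma densities_exist_0: "densities_exist 0"
  by (rule densities_existI) (use has_density_UNIV has_density_empty in \<open>auto simp: d_0\<close>)

lemma has_density_b_1_ge_2:
  assumes "2 \<le> k"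
  shows "has_density {m. d 1 (2 * m + 1) = k} 0"
proof -
  have "d 1 (2 * m + 1) \<noteq> k" for m
    using d_1_le[of "2 * m + 1"] assms by linarith
  then show ?thesis
    using has_density_empty by simp
qed

lemma densities_exist_1: "densities_exist 1"
proof (rule densities_existI)
  have even: "has_density {m. d 1 (2 * m) = k} ((a 0 k + b 0 (k - 1)) / 2)" for k
    using has_density_a_double_plus1[OF densities_exist_0, of k] by simp
  then show "\<exists>x. has_density {m. d 1 (2 * m) = k} x" for k ..
  txt \<open>On odd arguments the level sets at level 1 refer back to level 1 itself, since
    d(1, 4j + 3) = d(1, 2j + 1) - 1; induct downwards from the empty sets with k \<ge> 2.\<close>
  show "\<exists>y. has_density {m. d 1 (2 * m + 1) = k} y" for k
  proof (cases "k \<le> 2")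
    case True
    then show ?thesis
    proof (induction k rule: int_le_induct)
      case base
      then show ?case
        using has_density_b_1_ge_2 by blast
    next
      case (step i)
      then obtain y where "has_density {m. d 1 (2 * m + 1) = i} y"
        by blast
      have "has_density {m. d 1 (2 * m + 1) = i - 1} (((a 0 (i - 1) + b 0 (i - 2)) / 2 + y) / 2)"
      proof (rule has_density_level_set)
        show "d 1 (2 * (2 * j) + 1) = d 1 (2 * j) + 0" for j
          using d_odd_odd[of 0 "2 * j"] by simp
        show "d 1 (2 * (2 * j + 1) + 1) = d 1 (2 * j + 1) + - 1" for j
          using d_odd_odd[of 0 "2 * j + 1"] by simp
        show "has_density {j. d 1 (2 * j) = i - 1 - 0} ((a 0 (i - 1) + b 0 (i - 2)) / 2)"
          using even[of "i - 1"] by simp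
        show "has_density {j. d 1 (2 * j + 1) = i - 1 - - 1} y"
          using \<open>has_density {m. d 1 (2 * m + 1) = i} y\<close> by simp
      qed
      then show ?case ..
    qed
  qed (use has_density_b_1_ge_2[of k] in fastforce)
qed

lemma densities_exist_all: "densities_exist t"
proof (induction t rule: less_induct)
  case (less t)
  consider "t = 0" | "t = 1" | s where "t = 2 * s" "0 < s" | s where "t = 2 * s + 1" "0 < s"
    by (metis evenE oddE gr0I mult_0_right add_0)
  then show ?case
  proof cases
    case 3
    then have "densities_exist s"
      using less by simp
    then show ?thesis
      unfolding \<open>t = 2 * s\<close>
      by (meson densities_existI has_density_a_double has_density_b_double)
  next
    case 4
    then have "densities_exist s" "densities_exist (s + 1)"
      using less by simp_all
    then show ?thesis
      unfolding \<open>t = 2 * s + 1\<close>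
      by (meson densities_existI has_density_a_double_plus1 has_density_b_double_plus1)
  qed (use densities_exist_0 densities_exist_1 in simp_all)
qed

lemma a_eqI: "has_density {m. d t (2 * m) = k} x \<Longrightarrow> a t k = x"
  by (simp add: a_def asym_density_eqI)

lemma b_eqI: "has_density {m. d t (2 * m + 1) = k} x \<Longrightarrow> b t k = x"
  by (simp add: b_def asym_density_eqI)

definition mix :: "(int \<Rightarrow> real) \<Rightarrow> (int \<Rightarrow> real) \<Rightarrow> int \<Rightarrow> real" where
  "mix p q k = (p k + q k) / 2"

definition shift :: "int \<Rightarrow> (int \<Rightarrow> real) \<Rightarrow> int \<Rightarrow> real" where
  "shift c p k = p (k - c)"

lemma a_double: "a (2 * s) = mix (a s) (b s)"
  unfolding mix_def[abs_def] by (intro ext a_eqI has_density_a_double densities_exist_all)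

lemma b_double: "b (2 * s) = mix (shift (of_bool (odd s)) (a s)) (shift (- of_bool (odd s)) (b s))"
proof (intro ext b_eqI)
  show "has_density {m. d (2 * s) (2 * m + 1) = k}
      (mix (shift (of_bool (odd s)) (a s)) (shift (- of_bool (odd s)) (b s)) k)" for k
    using has_density_b_double[OF densities_exist_all, of s k] by (simp add: mix_def shift_def)
qed

lemma a_double_plus1:
  "a (2 * s + 1) = mix (shift (of_bool (odd s)) (a s)) (shift (of_bool (even s)) (b s))"
  unfolding mix_def[abs_def] shift_def[abs_def]
  by (intro ext a_eqI has_density_a_double_plus1 densities_exist_all)

lemma b_double_plus1: "b (2 * s + 1) = mix (a (s + 1)) (shift (- 1) (b (s + 1)))"
proof (intro ext b_eqI)
  show "has_density {m. d (2 * s + 1) (2 * m + 1) = k}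
      (mix (a (s + 1)) (shift (- 1) (b (s + 1))) k)" for k
    using has_density_b_double_plus1[OF densities_exist_all, of s k] by (simp add: mix_def shift_def)
qed

lemma a_0: "a 0 = (\<lambda>k. of_bool (k = 0))"
  using has_density_const by (intro ext a_eqI) (simp add: d_0)

lemma b_0: "b 0 = (\<lambda>k. of_bool (k = 0))"
  using has_density_const by (intro ext b_eqI) (simp add: d_0)

lemma b_nonneg: "0 \<le> b t k"
  using densities_exist_all[of t] by (auto simp: densities_exist_def intro: has_density_nonneg)

lemma b_1_eq_0: "2 \<le> k \<Longrightarrow> b 1 k = 0"
  by (intro b_eqI has_density_b_1_ge_2)

section \<open>Moments of distributions on the integers\<close>

definition has_moments :: "(int \<Rightarrow> real) \<Rightarrow> real \<Rightarrow> real \<Rightarrow> real \<Rightarrow> bool" where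
  "has_moments p m0 m1 m2 \<longleftrightarrow> (p has_sum m0) UNIV \<and> ((\<lambda>k. of_int k * p k) has_sum m1) UNIV
     \<and> ((\<lambda>k. of_int k ^ 2 * p k) has_sum m2) UNIV"

definition second_moment :: "(int \<Rightarrow> real) \<Rightarrow> real" where
  "second_moment p = (\<Sum>\<^sub>\<infinity>k. of_int k ^ 2 * p k)"

lemma has_moments_unique:
  "has_moments p m0 m1 m2 \<Longrightarrow> has_moments p n0 n1 n2 \<Longrightarrow> m0 = n0 \<and> m1 = n1 \<and> m2 = n2"
  unfolding has_moments_def using has_sum_unique by blast

lemma has_moments_second_moment: "has_moments p m0 m1 m2 \<Longrightarrow> second_moment p = m2"
  unfolding has_moments_def second_moment_def by (blast intro: infsumI)

lemma variance_int_eq: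
  assumes "has_moments p 1 m1 m2"
  shows "variance_int p = m2 - m1 ^ 2"
proof -
  have p: "(p has_sum 1) UNIV" and p1: "((\<lambda>k. of_int k * p k) has_sum m1) UNIV"
    and p2: "((\<lambda>k. of_int k ^ 2 * p k) has_sum m2) UNIV"
    using assms by (simp_all add: has_moments_def)
  have "((\<lambda>k. of_int k ^ 2 * p k + (- 2 * m1) * (of_int k * p k) + m1 ^ 2 * p k) has_sum
      (m2 + (- 2 * m1) * m1 + m1 ^ 2 * 1)) UNIV"
    by (intro has_sum_add has_sum_cmult_right p p1 p2)
  then have "((\<lambda>k. (of_int k - m1) ^ 2 * p k) has_sum (m2 - m1 ^ 2)) UNIV"
    by (simp add: power2_eq_square algebra_simps)
  then show ?thesis
    unfolding variance_int_def Let_def infsumI[OF p1] by (rule infsumI)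
qed

lemma has_sum_mix:
  assumes "((\<lambda>k. w k * p k) has_sum x) UNIV" and "((\<lambda>k. w k * q k) has_sum y) UNIV"
  shows "((\<lambda>k. w k * mix p q k) has_sum ((x + y) / 2)) UNIV"
proof -
  have "((\<lambda>k. (w k * p k + w k * q k) / 2) has_sum ((x + y) / 2)) UNIV"
    by (intro has_sum_divide_const has_sum_add assms)
  moreover have "(\<lambda>k. (w k * p k + w k * q k) / 2) = (\<lambda>k. w k * mix p q k)"
    by (auto simp: mix_def algebra_simps)
  ultimately show ?thesis
    by simp
qed

lemma has_sum_shift_iff:
  "((\<lambda>k. w k * shift c p k) has_sum S) UNIV \<longleftrightarrow> ((\<lambda>k. w (k + c) * p k) has_sum S) UNIV"
proof -
  have "bij_betw (\<lambda>k. k + c) UNIV UNIV"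
    by (rule bij_betwI[of _ _ _ "\<lambda>k. k - c"]) auto
  from has_sum_reindex_bij_betw[OF this, of "\<lambda>k. w k * shift c p k"] show ?thesis
    by (simp add: shift_def)
qed

lemma has_moments_mix:
  "has_moments p x0 x1 x2 \<Longrightarrow> has_moments q y0 y1 y2 \<Longrightarrow>
     has_moments (mix p q) ((x0 + y0) / 2) ((x1 + y1) / 2) ((x2 + y2) / 2)"
  unfolding has_moments_def using has_sum_mix[of "\<lambda>_. 1" p _ q] has_sum_mix by auto

lemma has_moments_shift:
  assumes "has_moments p m0 m1 m2"
  shows "has_moments (shift c p) m0 (m1 + of_int c * m0)
    (m2 + 2 * of_int c * m1 + of_int c ^ 2 * m0)"
proof -
  have p: "(p has_sum m0) UNIV" and p1: "((\<lambda>k. of_int k * p k) has_sum m1) UNIV"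
    and p2: "((\<lambda>k. of_int k ^ 2 * p k) has_sum m2) UNIV"
    using assms by (simp_all add: has_moments_def)
  have "((\<lambda>k. of_int k * p k + of_int c * p k) has_sum (m1 + of_int c * m0)) UNIV"
    by (intro has_sum_add has_sum_cmult_right p p1)
  moreover have "((\<lambda>k. of_int k ^ 2 * p k + (2 * of_int c) * (of_int k * p k) + of_int c ^ 2 * p k)
      has_sum (m2 + (2 * of_int c) * m1 + of_int c ^ 2 * m0)) UNIV"
    by (intro has_sum_add has_sum_cmult_right p p1 p2)
  ultimately show ?thesis
    using p unfolding has_moments_def has_sum_shift_iff[where w = of_int, simplified]
      has_sum_shift_iff[where w = "\<lambda>k. of_int k ^ 2"]
      has_sum_shift_iff[where w = "\<lambda>_. 1", simplified]
    by (simp add: power2_eq_square algebra_simps)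
qed

lemma has_moments_delta: "has_moments (\<lambda>k. of_bool (k = 0)) 1 0 0"
  unfolding has_moments_def
  by (intro conjI has_sum_finite_neutralI[of "{0}"]) auto

lemma abs_le_1_plus_square: "\<bar>x :: real\<bar> \<le> 1 + x ^ 2"
proof (cases "\<bar>x\<bar> \<le> 1")
  case False
  then have "\<bar>x\<bar> * 1 \<le> \<bar>x\<bar> * \<bar>x\<bar>"
    by (intro mult_left_mono) auto
  then show ?thesis
    by (simp add: power2_eq_square)
qed (use zero_le_power2[of x] in linarith)

lemma has_moments_if_dominated:
  assumes "\<And>k. 0 \<le> p k" and "\<And>k. p k \<le> g k"
    and "(\<lambda>k. (1 + of_int k ^ 2) * g k) summable_on UNIV"
  shows "\<exists>m0 m1 m2. has_moments p m0 m1 m2"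
proof -
  have "(\<lambda>k. w k * p k) summable_on UNIV" if w: "\<And>k. \<bar>w k\<bar> \<le> 1 + of_int k ^ 2" for w
  proof -
    have "(\<lambda>k. norm (w k * p k)) summable_on UNIV"
    proof (rule summable_on_comparison_test[OF assms(3)])
      show "norm (w k * p k) \<le> (1 + of_int k ^ 2) * g k" for k
        using mult_mono[OF w assms(2)] assms(1)[of k] by (simp add: abs_mult)
    qed simp
    then show ?thesis
      using summable_on_iff_abs_summable_on_real by blast
  qed
  from this[of "\<lambda>_. 1"] this[of of_int] this[of "\<lambda>k. of_int k ^ 2"] show ?thesis
    unfolding has_moments_def by (auto intro: has_sum_infsum abs_le_1_plus_square)
qed

section \<open>Moments of \<^const>\<open>a\<close> and \<^const>\<open>b\<close>\<close>

lemma a_1: "a 1 k = of_bool (k \<in> {0, 1}) / 2"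
  using fun_cong[OF a_double_plus1[of 0], of k] by (auto simp: mix_def shift_def a_0 b_0)

lemma b_1_rec: "b 1 k = (a 1 k + b 1 (k + 1)) / 2"
  using fun_cong[OF b_double_plus1[of 0], of k] by (simp add: mix_def shift_def)

definition b_1_majorant :: "int \<Rightarrow> real" where
  "b_1_majorant k = (if k \<le> 1 then (3 / 4) ^ nat (1 - k) else 0)"

text \<open>The ratio 3/4 rather than 1/2 absorbs the mass of \<^term>\<open>a 1\<close> at 0 and 1.\<close>

lemma b_1_le_majorant: "b 1 k \<le> b_1_majorant k"
proof (cases "k \<le> 2")
  case True
  then show ?thesis
  proof (induction k rule: int_le_induct)
    case base
    then show ?case
      using b_1_eq_0 by (simp add: b_1_majorant_def)
  next
    case (step i)
    have rec: "b 1 (i - 1) = (a 1 (i - 1) + b 1 i) / 2"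
      using b_1_rec[of "i - 1"] by simp
    consider "i = 2" | "i = 1" | "i \<le> 0"
      using step.hyps by linarith
    then show ?case
    proof cases
      case 3
      then have "b 1 (i - 1) = b 1 i / 2"
        using rec a_1[of "i - 1"] by simp
      also have "\<dots> \<le> (3 / 4) ^ nat (1 - i) / 2"
        using step.IH 3 by (simp add: b_1_majorant_def)
      also have "\<dots> \<le> (3 / 4) ^ Suc (nat (1 - i))"
        by simp
      also have "Suc (nat (1 - i)) = nat (1 - (i - 1))"
        using 3 by simp
      finally show ?thesis
        using 3 by (simp add: b_1_majorant_def)
    qed (use rec step.IH b_1_eq_0[of 2] a_1[of 0] a_1[of 1] in \<open>simp_all add: b_1_majorant_def\<close>)
  qed
qed (use b_1_eq_0[of k] in \<open>simp add: b_1_majorant_def\<close>)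

lemma summable_on_b_1_majorant_moments:
  "(\<lambda>k. (1 + of_int k ^ 2) * b_1_majorant k) summable_on UNIV"
proof -
  have "summable (\<lambda>n. (1 + (1 - real n) ^ 2) * (3 / 4 :: real) ^ n)"
    by (rule summable_comparison_test_bigo[where g = "\<lambda>n. (7 / 8) ^ n"]) (simp, real_asymp)
  then have "(\<lambda>n. (1 + of_int (1 - int n) ^ 2) * (3 / 4 :: real) ^ n) summable_on UNIV"
    by (subst summable_on_UNIV_nonneg_real_iff) simp_all
  moreover have "bij_betw (\<lambda>n. 1 - int n) UNIV {..1}"
    by (rule bij_betwI[of _ _ _ "\<lambda>k. nat (1 - k)"]) auto
  ultimately have "(\<lambda>k. (1 + of_int k ^ 2) * b_1_majorant k) summable_on {..1}"
    by (simp add: b_1_majorant_def flip: summable_on_reindex_bij_betw)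
  then show ?thesis
    by (rule summable_on_cong_neutral[THEN iffD1, rotated -1]) (auto simp: b_1_majorant_def)
qed

lemma has_moments_a_1: "has_moments (a 1) 1 (1 / 2) (1 / 2)"
  using has_moments_mix[OF has_moments_shift[OF has_moments_delta, of 0]
      has_moments_shift[OF has_moments_delta, of 1]]
  by (simp add: a_double_plus1[of 0, simplified] a_0 b_0)

lemma has_moments_b_1: "has_moments (b 1) 1 (- 1 / 2) (second_moment (b 1))"
proof -
  txt \<open>Domination yields the moments; the fixed-point equation for \<^term>\<open>b 1\<close> forces
    their values.\<close>
  obtain m0 m1 m2 where m: "has_moments (b 1) m0 m1 m2"
    using has_moments_if_dominated[OF b_nonneg b_1_le_majorant summable_on_b_1_majorant_moments]
    by blast
  have "mix (a 1) (shift (- 1) (b 1)) = b 1"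
    using b_double_plus1[of 0] by simp
  then have "has_moments (b 1) ((1 + m0) / 2) ((1 / 2 + (m1 + of_int (- 1) * m0)) / 2)
      ((1 / 2 + (m2 + 2 * of_int (- 1) * m1 + of_int (- 1) ^ 2 * m0)) / 2)"
    using has_moments_mix[OF has_moments_a_1 has_moments_shift[OF m, of "- 1"]] by simp
  from has_moments_unique[OF this m] have "m0 = 1" "m1 = - 1 / 2"
    by simp_all
  with m show ?thesis
    using has_moments_second_moment by blast
qed

lemma has_moments_double:
  assumes a: "has_moments (a s) 1 (of_bool (odd s) / 2) xa"
    and b: "has_moments (b s) 1 (- of_bool (odd s) / 2) xb"
  shows "has_moments (a (2 * s)) 1 0 ((xa + xb) / 2)"
    and "has_moments (b (2 * s)) 1 0 ((xa + xb) / 2 + 2 * of_bool (odd s))"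
proof -
  show "has_moments (a (2 * s)) 1 0 ((xa + xb) / 2)"
    using has_moments_mix[OF a b] by (simp add: a_double)
  show "has_moments (b (2 * s)) 1 0 ((xa + xb) / 2 + 2 * of_bool (odd s))"
    using has_moments_mix[OF has_moments_shift[OF a, of "of_bool (odd s)"]
        has_moments_shift[OF b, of "- of_bool (odd s)"]]
    unfolding b_double by (cases "odd s") (simp_all add: field_simps)
qed

lemma has_moments_a_double_plus1:
  assumes a: "has_moments (a s) 1 (of_bool (odd s) / 2) xa"
    and b: "has_moments (b s) 1 (- of_bool (odd s) / 2) xb"
  shows "has_moments (a (2 * s + 1)) 1 (1 / 2) ((xa + xb + 1 + of_bool (odd s)) / 2)"
  using has_moments_mix[OF has_moments_shift[OF a, of "of_bool (odd s)"]
      has_moments_shift[OF b, of "of_bool (even s)"]]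
  unfolding a_double_plus1 by (cases "odd s") (simp_all add: field_simps)

lemma has_moments_b_double_plus1:
  assumes a: "has_moments (a (s + 1)) 1 (of_bool (odd (s + 1)) / 2) xa"
    and b: "has_moments (b (s + 1)) 1 (- of_bool (odd (s + 1)) / 2) xb"
  shows "has_moments (b (2 * s + 1)) 1 (- 1 / 2) ((xa + xb + 1 + of_bool (odd (s + 1))) / 2)"
  using has_moments_mix[OF a has_moments_shift[OF b, of "- 1"]]
  unfolding b_double_plus1 by (cases "odd s") (simp_all add: field_simps)

lemma has_moments_a_b_exist:
  "\<exists>xa xb. has_moments (a t) 1 (of_bool (odd t) / 2) xa
     \<and> has_moments (b t) 1 (- of_bool (odd t) / 2) xb"
proof (induction t rule: less_induct)
  case (less t)
  consider "t = 0" | "t = 1" | s where "t = 2 * s" "0 < s" | s where "t = 2 * s + 1" "0 < s"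
    by (metis evenE oddE gr0I mult_0_right add_0)
  then show ?case
  proof cases
    case 1
    then show ?thesis
      using has_moments_delta by (auto simp: a_0 b_0)
  next
    case 2
    then show ?thesis
      using has_moments_a_1 has_moments_b_1 by auto
  next
    case 3
    then obtain xa xb where "has_moments (a s) 1 (of_bool (odd s) / 2) xa"
      "has_moments (b s) 1 (- of_bool (odd s) / 2) xb"
      using less[of s] by auto
    from has_moments_double[OF this] show ?thesis
      using 3 by auto
  next
    case 4
    then obtain xa xb xa' xb' where "has_moments (a s) 1 (of_bool (odd s) / 2) xa"
      "has_moments (b s) 1 (- of_bool (odd s) / 2) xb"
      "has_moments (a (s + 1)) 1 (of_bool (odd (s + 1)) / 2) xa'"
      "has_moments (b (s + 1)) 1 (- of_bool (odd (s + 1)) / 2) xb'"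
      using less[of s] less[of "s + 1"] by auto
    from has_moments_a_double_plus1[OF this(1,2)] has_moments_b_double_plus1[OF this(3,4)]
    show ?thesis
      using 4 by auto
  qed
qed

lemma has_moments_a: "has_moments (a t) 1 (of_bool (odd t) / 2) (second_moment (a t))"
  using has_moments_a_b_exist has_moments_second_moment by blast

lemma has_moments_b: "has_moments (b t) 1 (- of_bool (odd t) / 2) (second_moment (b t))"
  using has_moments_a_b_exist has_moments_second_moment by blast

definition second_moment_sum :: "nat \<Rightarrow> real" where
  "second_moment_sum t = second_moment (a t) + second_moment (b t)"

lemma second_moment_a_double: "second_moment (a (2 * s)) = second_moment_sum s / 2"
  using has_moments_second_moment[OF has_moments_double(1)[OF has_moments_a has_moments_b]]
  by (simp add: second_moment_sum_def)

lemma second_moment_b_double: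
  "second_moment (b (2 * s)) = second_moment_sum s / 2 + 2 * of_bool (odd s)"
  using has_moments_second_moment[OF has_moments_double(2)[OF has_moments_a has_moments_b]]
  by (simp add: second_moment_sum_def)

lemma second_moment_a_double_plus1:
  "second_moment (a (2 * s + 1)) = (second_moment_sum s + 1 + of_bool (odd s)) / 2"
  using has_moments_second_moment[OF has_moments_a_double_plus1[OF has_moments_a has_moments_b]]
  by (simp add: second_moment_sum_def)

lemma second_moment_b_double_plus1:
  "second_moment (b (2 * s + 1)) = (second_moment_sum (s + 1) + 1 + of_bool (odd (s + 1))) / 2"
  using has_moments_second_moment[OF has_moments_b_double_plus1[OF has_moments_a has_moments_b]]
  by (simp add: second_moment_sum_def)

lemma second_moment_sum_double:
  "second_moment_sum (2 * s) = second_moment_sum s + 2 * of_bool (odd s)"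
  unfolding second_moment_sum_def[of "2 * s"] second_moment_a_double second_moment_b_double
  by simp

lemma second_moment_sum_double_plus1:
  "second_moment_sum (2 * s + 1) = (second_moment_sum s + second_moment_sum (s + 1) + 3) / 2"
  unfolding second_moment_sum_def[of "2 * s + 1"]
    second_moment_a_double_plus1 second_moment_b_double_plus1
  by (cases "odd s") (simp_all add: field_simps)

lemma second_moment_sum_Suc_diff: "\<bar>second_moment_sum (s + 1) - second_moment_sum s\<bar> \<le> 3"
proof (induction s rule: less_induct)
  case (less s)
  consider "s = 0" | u where "s = 2 * u" "0 < u" | u where "s = 2 * u + 1"
    by (metis evenE oddE gr0I mult_0_right)
  then show ?case
  proof cases
    case 1
    then show ?thesis
      using second_moment_sum_double_plus1[of 0] by simp
  next
    case 2
    then have "\<bar>second_moment_sum (u + 1) - second_moment_sum u\<bar> \<le> 3"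
      using less by simp
    then show ?thesis
      unfolding \<open>s = 2 * u\<close> second_moment_sum_double_plus1 second_moment_sum_double
      by (cases "odd u") (auto simp: abs_le_iff field_simps)
  next
    case 3
    then have "\<bar>second_moment_sum (u + 1) - second_moment_sum u\<bar> \<le> 3"
      using less by simp
    moreover have "second_moment_sum (s + 1) = second_moment_sum (u + 1) + 2 * of_bool (even u)"
    proof -
      have "s + 1 = 2 * (u + 1)"
        using 3 by simp
      then show ?thesis
        by (simp only: second_moment_sum_double) simp
    qed
    moreover have "second_moment_sum s = (second_moment_sum u + second_moment_sum (u + 1) + 3) / 2"
      using second_moment_sum_double_plus1[of u] 3 by simp
    ultimately show ?thesis
      by (cases "odd u") (auto simp: abs_le_iff field_simps)
  qed
qed

lemma second_moment_a_b_diff: "\<bar>second_moment (a t) - second_moment (b t)\<bar> \<le> 2"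
proof (cases "even t")
  case True
  then obtain s where "t = 2 * s" ..
  then show ?thesis
    by (simp add: second_moment_a_double second_moment_b_double)
next
  case False
  then obtain s where "t = 2 * s + 1" ..
  then show ?thesis
    using second_moment_sum_Suc_diff[of s]
    unfolding \<open>t = 2 * s + 1\<close> second_moment_a_double_plus1 second_moment_b_double_plus1
    by (cases "odd s") (auto simp: abs_le_iff field_simps)
qed

theorem lemma3p6:
  fixes t :: nat
  shows "\<bar>v_alpha t - v_beta t\<bar> \<le> 48"
proof -
  have "v_alpha t - v_beta t = second_moment (a t) - second_moment (b t)"
    using variance_int_eq[OF has_moments_a] variance_int_eq[OF has_moments_b]
    by (simp add: v_alpha_def v_beta_def)
  then show ?thesis
    using second_moment_a_b_diff[of t] by simp
qed

end
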